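(* Let $\mathbb{F}$ be any field. There exists a family $\{P_d\}$ of polynomials in $\mathsf{VNP}$, where $P_d$ has degree $d$ and is in $n = \mathrm{poly}(d)$ variables, such that any $\Sigma\Pi\Sigma$ circuit over $\mathbb{F}$ of formal degree $d$ which is functionally equivalent to $P_d$ over $\{0,1\}^n$ has size at least $\exp(\Omega(d\log n))$.
   Context: A $\Sigma\Pi\Sigma$ (depth-3) circuit over $\mathbb{F}$ computes an expression $\sum_{i=1}^{s}\prod_{j=1}^{d_i} L_{i,j}(\mathbf{x})$ where each $L_{i,j}$ is an affine form in the variables $x_1,\dots,x_n$; its formal degree is $\max_i d_i$, and its size is at least its top fan-in $s$. A circuit $C$ is functionally equivalent to a polynomial $P\in\mathbb{F}[x_1,\dots,x_n]$ over $\{0,1\}^n$ if $C(\mathbf{x})=P(\mathbf{x})$ for every $\mathbf{x}\in\{0,1\}^n$ (as opposed to $C\equiv P$ as formal polynomials). $\mathsf{VNP}$ denotes Valiant's class of families of polynomials that are explicit in the algebraic sense (families of the form $P_n(\mathbf{x})=\sum_{\mathbf{b}\in\{0,1\}^{m}} g_n(\mathbf{x},\mathbf{b})$ with $m=\mathrm{poly}(n)$ and $\{g_n\}$ computable by polynomial-size arithmetic circuits of polynomial degree). *)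

theory Defs
  imports Complex_Main "HOL-Library.Poly_Mapping"
begin

text \<open>A monomial is a finitely supported exponent vector nat =>0 nat;
  a polynomial is a finitely supported map from monomials to coefficients.\<close>

type_synonym 'a mpoly = "(nat \<Rightarrow>\<^sub>0 nat) \<Rightarrow>\<^sub>0 'a"

definition mvar :: "nat \<Rightarrow> 'a::comm_ring_1 mpoly" where
  "mvar i = Poly_Mapping.single (Poly_Mapping.single i 1) 1"

definition mconst :: "'a::comm_ring_1 \<Rightarrow> 'a mpoly" where
  "mconst c = Poly_Mapping.single 0 c"

definition mon_degree :: "(nat \<Rightarrow>\<^sub>0 nat) \<Rightarrow> nat" where
  "mon_degree m = (\<Sum>i\<in>Poly_Mapping.keys m. Poly_Mapping.lookup m i)"

text \<open>Total degree (degree of the zero polynomial is 0).\<close>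
definition total_degree :: "'a::zero mpoly \<Rightarrow> nat" where
  "total_degree p = Max (insert 0 (mon_degree ` Poly_Mapping.keys p))"

definition mvars :: "'a::zero mpoly \<Rightarrow> nat set" where
  "mvars p = (\<Union>m\<in>Poly_Mapping.keys p. Poly_Mapping.keys m)"

definition meval :: "'a::comm_ring_1 mpoly \<Rightarrow> (nat \<Rightarrow> 'a) \<Rightarrow> 'a" where
  "meval p x = (\<Sum>m\<in>Poly_Mapping.keys p. Poly_Mapping.lookup p m * (\<Prod>i\<in>Poly_Mapping.keys m. x i ^ Poly_Mapping.lookup m i))"

text \<open>Gate k may refer to gates with smaller index; references to
  non-existing gates evaluate to 0. The output is the last gate.
  The size of a circuit is its number of gates.\<close>

datatype 'a gate = Inp nat | Cst 'a | Add nat nat | Mul nat nat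

fun gate_val :: "(nat \<Rightarrow> 'a::comm_ring_1 mpoly) \<Rightarrow> 'a mpoly list \<Rightarrow> 'a gate \<Rightarrow> 'a mpoly" where
  "gate_val env vs (Inp i) = env i"
| "gate_val env vs (Cst c) = mconst c"
| "gate_val env vs (Add i j) =
     (if i < length vs \<and> j < length vs then vs ! i + vs ! j else 0)"
| "gate_val env vs (Mul i j) =
     (if i < length vs \<and> j < length vs then vs ! i * vs ! j else 0)"

definition circuit_vals :: "(nat \<Rightarrow> 'a::comm_ring_1 mpoly) \<Rightarrow> 'a gate list \<Rightarrow> 'a mpoly list" where
  "circuit_vals env gs = foldl (\<lambda>vs g. vs @ [gate_val env vs g]) [] gs"

definition circuit_poly :: "(nat \<Rightarrow> 'a::comm_ring_1 mpoly) \<Rightarrow> 'a gate list \<Rightarrow> 'a mpoly" where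
  "circuit_poly env gs = (if gs = [] then 0 else last (circuit_vals env gs))"

definition circuit_size :: "'a gate list \<Rightarrow> nat" where
  "circuit_size gs = length gs"

definition bool_vecs :: "nat \<Rightarrow> (nat \<Rightarrow> bool) set" where
  "bool_vecs m = {b. \<forall>i\<ge>m. \<not> b i}"

text \<open>P d is a polynomial in the variables x_0..x_{nv d - 1}. Variable x_i of g_d is
  input i < nv d, and y_j is input nv d + j.\<close>
definition in_VNP :: "(nat \<Rightarrow> nat) \<Rightarrow> (nat \<Rightarrow> 'a::comm_ring_1 mpoly) \<Rightarrow> bool" where
  "in_VNP nv P \<longleftrightarrow>
     (\<exists>k::nat. \<exists>m :: nat \<Rightarrow> nat. \<exists>G :: nat \<Rightarrow> 'a gate list. \<forall>d.
        nv d \<le> (d + 1) ^ k \<and>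
        m d \<le> (d + 1) ^ k \<and>
        circuit_size (G d) \<le> (d + 1) ^ k \<and>
        total_degree (circuit_poly mvar (G d)) \<le> (d + 1) ^ k \<and>
        P d = (\<Sum>b\<in>bool_vecs (m d).
                 circuit_poly (\<lambda>i. if i < nv d then mvar i
                                    else if b (i - nv d) then 1 else 0) (G d)))"

text \<open>An affine form in x_0..x_{n-1} is (c, a) standing for
  c + a 0 * x_0 + ... + a (n-1) * x_(n-1). A Sigma Pi Sigma circuit is a list
  (the top sum) of lists (the products) of affine forms.\<close>

type_synonym 'a affine = "'a \<times> (nat \<Rightarrow> 'a)"
type_synonym 'a sps = "'a affine list list"

definition affine_eval :: "nat \<Rightarrow> 'a::comm_ring_1 affine \<Rightarrow> (nat \<Rightarrow> 'a) \<Rightarrow> 'a" where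
  "affine_eval n L x = fst L + (\<Sum>i<n. snd L i * x i)"

definition sps_eval :: "nat \<Rightarrow> 'a::comm_ring_1 sps \<Rightarrow> (nat \<Rightarrow> 'a) \<Rightarrow> 'a" where
  "sps_eval n C x = (\<Sum>p\<leftarrow>C. \<Prod>L\<leftarrow>p. affine_eval n L x)"

text \<open>Formal degree: maximum fan-in of the product gates.\<close>
definition sps_formal_degree :: "'a sps \<Rightarrow> nat" where
  "sps_formal_degree C = Max (insert 0 (length ` set C))"

text \<open>Size: number of gates (output sum gate, s product gates and one
  sum gate per affine form); it is at least the top fan-in s.\<close>
definition sps_size :: "'a sps \<Rightarrow> nat" where
  "sps_size C = 1 + length C + (\<Sum>p\<leftarrow>C. length p)"

definition functionally_equiv :: "nat \<Rightarrow> 'a::comm_ring_1 sps \<Rightarrow> 'a mpoly \<Rightarrow> bool" where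
  "functionally_equiv n C P \<longleftrightarrow>
     (\<forall>x. (\<forall>i. x i \<in> {0, 1}) \<longrightarrow> sps_eval n C x = meval P x)"

end

theory Submission
  imports Defs "HOL-Library.FuncSet" "HOL-Library.Function_Algebras"
begin

text \<open>
  Take h = d div 2, r = d + 1 and P_d = prod_{j<h} sum_{t<r} y_jt z_jt, times one
  extra variable when d is odd. It has degree d, O(d^2) variables and an obvious
  small formula, so it lies in VNP. Setting the y's and the z's independently to the
  0/1 vectors that encode choice functions \<sigma>, \<tau> : [h] \<rightarrow> [r], P_d evaluates to
  [\<sigma> = \<tau>]: a full-rank r^h \<times> r^h matrix. If a \<Sigma>\<Pi>\<Sigma> circuit with s products of fan-in at
  most d agrees with P_d on the cube, expanding each of its affine forms as L = L_y + L_z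
  shows that every row of this matrix, as a function of the z-assignment, is a
  combination of s 2^d fixed functions (products of subsets of the L_z). Hence
  s \<ge> (d+1)^h / 2^d = exp(\<Omega>(d log d)), and log n = \<Theta>(log d).
\<close>

definition mon_eval :: "(nat \<Rightarrow>\<^sub>0 nat) \<Rightarrow> (nat \<Rightarrow> 'a::comm_ring_1) \<Rightarrow> 'a" where
  "mon_eval m x = (\<Prod>i\<in>Poly_Mapping.keys m. x i ^ Poly_Mapping.lookup m i)"

lemma mon_eval_superset:
  assumes "finite K" "Poly_Mapping.keys m \<subseteq> K"
  shows "mon_eval m x = (\<Prod>i\<in>K. x i ^ Poly_Mapping.lookup m i)"
  unfolding mon_eval_def
  by (rule prod.mono_neutral_left) (use assms in \<open>auto simp: in_keys_iff\<close>)

lemma mon_eval_add: "mon_eval (a + b) x = mon_eval a x * mon_eval b x"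
proof -
  let ?K = "Poly_Mapping.keys a \<union> Poly_Mapping.keys b"
  have K: "finite ?K" by simp
  have "mon_eval (a + b) x = (\<Prod>i\<in>?K. x i ^ Poly_Mapping.lookup (a + b) i)"
    by (rule mon_eval_superset[OF K keys_add])
  also have "\<dots> = (\<Prod>i\<in>?K. x i ^ Poly_Mapping.lookup a i) * (\<Prod>i\<in>?K. x i ^ Poly_Mapping.lookup b i)"
    by (simp add: lookup_add power_add prod.distrib)
  also have "\<dots> = mon_eval a x * mon_eval b x"
    by (simp add: mon_eval_superset[OF K])
  finally show ?thesis .
qed

lemma mon_eval_zero [simp]: "mon_eval 0 x = 1"
  by (simp add: mon_eval_def)

lemma mon_eval_single [simp]: "mon_eval (Poly_Mapping.single i (Suc 0)) x = x i"
  by (simp add: mon_eval_def)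

lemma mon_eval_sum: "finite J \<Longrightarrow> mon_eval (\<Sum>j\<in>J. f j) x = (\<Prod>j\<in>J. mon_eval (f j) x)"
  by (induction J rule: finite_induct) (auto simp: mon_eval_add)

lemma meval_superset:
  assumes "finite K" "Poly_Mapping.keys p \<subseteq> K"
  shows "meval p x = (\<Sum>m\<in>K. Poly_Mapping.lookup p m * mon_eval m x)"
  unfolding meval_def mon_eval_def
  by (rule sum.mono_neutral_left) (use assms in \<open>auto simp: in_keys_iff\<close>)

lemma meval_add: "meval (p + q) x = meval p x + meval q x"
proof -
  let ?K = "Poly_Mapping.keys p \<union> Poly_Mapping.keys q"
  have K: "finite ?K" by simp
  have "meval (p + q) x = (\<Sum>m\<in>?K. Poly_Mapping.lookup (p + q) m * mon_eval m x)"
    by (rule meval_superset[OF K keys_add])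
  also have "\<dots> = (\<Sum>m\<in>?K. Poly_Mapping.lookup p m * mon_eval m x)
                  + (\<Sum>m\<in>?K. Poly_Mapping.lookup q m * mon_eval m x)"
    by (simp add: lookup_add distrib_right sum.distrib)
  also have "\<dots> = meval p x + meval q x"
    by (simp add: meval_superset[OF K])
  finally show ?thesis .
qed

lemma meval_zero [simp]: "meval 0 x = 0"
  by (simp add: meval_def)

lemma meval_single: "meval (Poly_Mapping.single m c) x = c * mon_eval m x"
  by (subst meval_superset[of "{m}"]) (auto simp: lookup_single)

lemma meval_sum: "finite J \<Longrightarrow> meval (\<Sum>j\<in>J. f j) x = (\<Sum>j\<in>J. meval (f j) x)"
  by (induction J rule: finite_induct) (auto simp: meval_add)

lemma mon_degree_superset:
  assumes "finite K" "Poly_Mapping.keys m \<subseteq> K"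
  shows "mon_degree m = (\<Sum>i\<in>K. Poly_Mapping.lookup m i)"
  unfolding mon_degree_def
  by (rule sum.mono_neutral_left) (use assms in \<open>auto simp: in_keys_iff\<close>)

lemma mon_degree_add: "mon_degree (a + b) = mon_degree a + mon_degree b"
proof -
  let ?K = "Poly_Mapping.keys a \<union> Poly_Mapping.keys b"
  have K: "finite ?K" by simp
  show ?thesis
    using mon_degree_superset[OF K keys_add[of a b]] mon_degree_superset[OF K, of a]
      mon_degree_superset[OF K, of b]
    by (simp add: lookup_add sum.distrib)
qed

lemma mon_degree_zero [simp]: "mon_degree 0 = 0"
  by (simp add: mon_degree_def)

lemma mon_degree_single [simp]: "mon_degree (Poly_Mapping.single i (Suc 0)) = 1"
  by (simp add: mon_degree_def)

lemma mon_degree_sum: "finite J \<Longrightarrow> mon_degree (\<Sum>j\<in>J. f j) = (\<Sum>j\<in>J. mon_degree (f j))"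
  by (induction J rule: finite_induct) (auto simp: mon_degree_add)

lemma prod_single_one:
  "finite J \<Longrightarrow> (\<Prod>j\<in>J. Poly_Mapping.single (f j) (1::'a::comm_semiring_1)) =
     Poly_Mapping.single (\<Sum>j\<in>J. f j) 1"
  by (induction J rule: finite_induct) (auto simp: mult_single)

lemma mvar_mult_mvar:
  "mvar a * mvar b =
     (Poly_Mapping.single (Poly_Mapping.single a 1 + Poly_Mapping.single b 1) 1 :: 'a::comm_ring_1 mpoly)"
  by (simp add: mvar_def mult_single)

section \<open>Compiling expressions into circuits\<close>

datatype 'a expr = EVar nat | EConst 'a | EAdd "'a expr" "'a expr" | EMul "'a expr" "'a expr"

fun expr_poly :: "(nat \<Rightarrow> 'a::comm_ring_1 mpoly) \<Rightarrow> 'a expr \<Rightarrow> 'a mpoly" where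
  "expr_poly env (EVar i) = env i"
| "expr_poly env (EConst c) = mconst c"
| "expr_poly env (EAdd a b) = expr_poly env a + expr_poly env b"
| "expr_poly env (EMul a b) = expr_poly env a * expr_poly env b"

fun expr_size :: "'a expr \<Rightarrow> nat" where
  "expr_size (EVar i) = 1"
| "expr_size (EConst c) = 1"
| "expr_size (EAdd a b) = expr_size a + expr_size b + 1"
| "expr_size (EMul a b) = expr_size a + expr_size b + 1"

lemma expr_size_pos: "expr_size e > 0"
  by (cases e) auto

text \<open>\<open>compile b e\<close> is placed after \<open>b\<close> existing gates; its own gates refer to absolute indices.\<close>
fun compile :: "nat \<Rightarrow> 'a expr \<Rightarrow> 'a gate list" where
  "compile b (EVar i) = [Inp i]"
| "compile b (EConst c) = [Cst c]"
| "compile b (EAdd e1 e2) = compile b e1 @ compile (b + expr_size e1) e2 @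
     [Add (b + expr_size e1 - 1) (b + expr_size e1 + expr_size e2 - 1)]"
| "compile b (EMul e1 e2) = compile b e1 @ compile (b + expr_size e1) e2 @
     [Mul (b + expr_size e1 - 1) (b + expr_size e1 + expr_size e2 - 1)]"

lemma length_compile [simp]: "length (compile b e) = expr_size e"
  by (induction e arbitrary: b) auto

definition run_gates :: "(nat \<Rightarrow> 'a::comm_ring_1 mpoly) \<Rightarrow> 'a mpoly list \<Rightarrow> 'a gate list \<Rightarrow> 'a mpoly list" where
  "run_gates env vs gs = foldl (\<lambda>vs g. vs @ [gate_val env vs g]) vs gs"

lemma run_gates_append: "run_gates env vs (gs1 @ gs2) = run_gates env (run_gates env vs gs1) gs2"
  by (simp add: run_gates_def)

lemma run_gates_single: "run_gates env vs [g] = vs @ [gate_val env vs g]"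
  by (simp add: run_gates_def)

lemma run_gates_extends: "\<exists>ws. run_gates env vs gs = vs @ ws \<and> length ws = length gs"
proof (induction gs rule: rev_induct)
  case Nil
  show ?case by (simp add: run_gates_def)
next
  case (snoc g gs)
  then show ?case by (auto simp: run_gates_append run_gates_single)
qed

lemma run_gates_compile_operands:
  fixes env :: "nat \<Rightarrow> 'a::comm_ring_1 mpoly" and vs :: "'a mpoly list" and e1 e2 :: "'a expr"
  assumes vs1_def: "vs1 = run_gates env vs (compile (length vs) e1)"
    and vs2_def: "vs2 = run_gates env vs1 (compile (length vs1) e2)"
  shows "length vs1 = length vs + expr_size e1" "length vs2 = length vs1 + expr_size e2"
    and "length vs1 - 1 < length vs2" "length vs2 - 1 < length vs2"
    and "vs2 ! (length vs1 - 1) = last vs1" "vs2 ! (length vs2 - 1) = last vs2"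
proof -
  obtain ws1 where ws1: "vs1 = vs @ ws1" "length ws1 = expr_size e1"
    using run_gates_extends unfolding vs1_def by fastforce
  obtain ws2 where ws2: "vs2 = vs1 @ ws2" "length ws2 = expr_size e2"
    using run_gates_extends unfolding vs2_def by fastforce
  have ne: "vs1 \<noteq> []" "ws2 \<noteq> []"
    using ws1 ws2 expr_size_pos[of e1] expr_size_pos[of e2] by auto
  show "length vs1 = length vs + expr_size e1" "length vs2 = length vs1 + expr_size e2"
    using ws1 ws2 by simp_all
  show "length vs1 - 1 < length vs2" "length vs2 - 1 < length vs2"
    using ne ws2 expr_size_pos[of e2] by auto
  show "vs2 ! (length vs1 - 1) = last vs1" "vs2 ! (length vs2 - 1) = last vs2"
    using ne by (simp_all add: ws2 nth_append last_conv_nth)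
qed

lemma last_run_gates_compile: "last (run_gates env vs (compile (length vs) e)) = expr_poly env e"
proof (induction e arbitrary: vs)
  case (EAdd e1 e2)
  define vs1 where "vs1 = run_gates env vs (compile (length vs) e1)"
  define vs2 where "vs2 = run_gates env vs1 (compile (length vs1) e2)"
  note ops = run_gates_compile_operands[OF vs1_def vs2_def]
  have "compile (length vs) (EAdd e1 e2) =
          compile (length vs) e1 @ compile (length vs1) e2 @ [Add (length vs1 - 1) (length vs2 - 1)]"
    using ops(1,2) by simp
  then show ?case
    using ops(3-6) EAdd.IH[of vs] EAdd.IH[of vs1] by (simp add: run_gates_append run_gates_single flip: vs1_def vs2_def)
next
  case (EMul e1 e2)
  define vs1 where "vs1 = run_gates env vs (compile (length vs) e1)"
  define vs2 where "vs2 = run_gates env vs1 (compile (length vs1) e2)"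
  note ops = run_gates_compile_operands[OF vs1_def vs2_def]
  have "compile (length vs) (EMul e1 e2) =
          compile (length vs) e1 @ compile (length vs1) e2 @ [Mul (length vs1 - 1) (length vs2 - 1)]"
    using ops(1,2) by simp
  then show ?case
    using ops(3-6) EMul.IH[of vs] EMul.IH[of vs1] by (simp add: run_gates_append run_gates_single flip: vs1_def vs2_def)
qed (simp_all add: run_gates_single)

lemma circuit_poly_compile: "circuit_poly env (compile 0 e) = expr_poly env e"
proof -
  have "compile 0 e \<noteq> []"
    using length_compile[of 0 e] expr_size_pos[of e] by (metis length_greater_0_conv)
  then show ?thesis
    using last_run_gates_compile[of env "[]" e]
    by (simp add: circuit_poly_def circuit_vals_def run_gates_def)
qed

fun sum_expr :: "'a::zero expr list \<Rightarrow> 'a expr" where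
  "sum_expr [] = EConst 0"
| "sum_expr (e # es) = EAdd e (sum_expr es)"

fun prod_expr :: "'a::one expr list \<Rightarrow> 'a expr" where
  "prod_expr [] = EConst 1"
| "prod_expr (e # es) = EMul e (prod_expr es)"

lemma expr_poly_sum_expr: "expr_poly env (sum_expr es) = (\<Sum>e\<leftarrow>es. expr_poly env e)"
  by (induction es) (auto simp: mconst_def)

lemma expr_poly_prod_expr: "expr_poly env (prod_expr es) = (\<Prod>e\<leftarrow>es. expr_poly env e)"
  by (induction es) (auto simp: mconst_def)

lemma expr_size_sum_expr: "expr_size (sum_expr es) = 1 + (\<Sum>e\<leftarrow>es. expr_size e + 1)"
  by (induction es) auto

lemma expr_size_prod_expr: "expr_size (prod_expr es) = 1 + (\<Sum>e\<leftarrow>es. expr_size e + 1)"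
  by (induction es) auto

section \<open>The hard polynomial\<close>

definition nfactors :: "nat \<Rightarrow> nat" where
  "nfactors d = d div 2"

definition nterms :: "nat \<Rightarrow> nat" where
  "nterms d = d + 1"

definition yvar :: "nat \<Rightarrow> nat \<Rightarrow> nat \<Rightarrow> nat" where
  "yvar d j t = 2 * (j * nterms d + t)"

definition zvar :: "nat \<Rightarrow> nat \<Rightarrow> nat \<Rightarrow> nat" where
  "zvar d j t = 2 * (j * nterms d + t) + 1"

definition extra_var :: "nat \<Rightarrow> nat" where
  "extra_var d = 2 * nfactors d * nterms d"

definition num_vars :: "nat \<Rightarrow> nat" where
  "num_vars d = extra_var d + 1"

definition choices :: "nat \<Rightarrow> (nat \<Rightarrow> nat) set" where
  "choices d = PiE {..<nfactors d} (\<lambda>_. {..<nterms d})"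

definition choice_mon :: "nat \<Rightarrow> (nat \<Rightarrow> nat) \<Rightarrow> (nat \<Rightarrow>\<^sub>0 nat)" where
  "choice_mon d \<sigma> =
     (\<Sum>j<nfactors d. Poly_Mapping.single (yvar d j (\<sigma> j)) 1 + Poly_Mapping.single (zvar d j (\<sigma> j)) 1)
     + (if odd d then Poly_Mapping.single (extra_var d) 1 else 0)"

definition hard_poly :: "nat \<Rightarrow> 'a::comm_ring_1 mpoly" where
  "hard_poly d = (\<Sum>\<sigma>\<in>choices d. Poly_Mapping.single (choice_mon d \<sigma>) 1)"

definition hard_expr :: "nat \<Rightarrow> 'a::comm_ring_1 expr" where
  "hard_expr d =
     prod_expr (map (\<lambda>j. sum_expr (map (\<lambda>t. EMul (EVar (yvar d j t)) (EVar (zvar d j t))) [0..<nterms d]))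
                  [0..<nfactors d]
                @ (if odd d then [EVar (extra_var d)] else []))"

lemma finite_choices: "finite (choices d)"
  by (simp add: choices_def finite_PiE)

lemma card_choices: "card (choices d) = nterms d ^ nfactors d"
  by (simp add: choices_def card_PiE)

lemma choices_nonempty: "choices d \<noteq> {}"
  using card_choices[of d] by (auto simp: nterms_def)

lemma choices_lt: "\<sigma> \<in> choices d \<Longrightarrow> j < nfactors d \<Longrightarrow> \<sigma> j < nterms d"
  by (auto simp: choices_def PiE_def Pi_def)

lemma pair_index_lt:
  fixes j t h r :: nat
  assumes "j < h" "t < r"
  shows "j * r + t < h * r"
proof -
  have "Suc j * r \<le> h * r"
    using assms(1) by (intro mult_le_mono1) simp
  then show ?thesis
    using assms(2) by simp
qed

lemma pair_index_eq_iff: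
  fixes j j' t t' r :: nat
  assumes "t < r" "t' < r"
  shows "j * r + t = j' * r + t' \<longleftrightarrow> j = j' \<and> t = t'"
proof
  assume eq: "j * r + t = j' * r + t'"
  have "j = (j * r + t) div r" "j' = (j' * r + t') div r"
    using assms by simp_all
  then have "j = j'"
    using eq by simp
  then show "j = j' \<and> t = t'"
    using eq by simp
qed simp

lemma yvar_lt_extra_var: "j < nfactors d \<Longrightarrow> t < nterms d \<Longrightarrow> yvar d j t < extra_var d"
  using pair_index_lt[of j "nfactors d" t "nterms d"] by (simp add: yvar_def extra_var_def)

lemma zvar_lt_extra_var: "j < nfactors d \<Longrightarrow> t < nterms d \<Longrightarrow> zvar d j t < extra_var d"
  using pair_index_lt[of j "nfactors d" t "nterms d"] by (simp add: zvar_def extra_var_def)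

lemma yvar_eq_iff:
  "t < nterms d \<Longrightarrow> t' < nterms d \<Longrightarrow> yvar d j t = yvar d j' t' \<longleftrightarrow> j = j' \<and> t = t'"
  using pair_index_eq_iff[of t "nterms d" t' j j'] by (auto simp: yvar_def)

lemma zvar_eq_iff:
  "t < nterms d \<Longrightarrow> t' < nterms d \<Longrightarrow> zvar d j t = zvar d j' t' \<longleftrightarrow> j = j' \<and> t = t'"
  using pair_index_eq_iff[of t "nterms d" t' j j'] by (auto simp: zvar_def)

lemma expr_poly_hard_expr:
  assumes env: "\<And>i. i < num_vars d \<Longrightarrow> env i = mvar i"
  shows "expr_poly env (hard_expr d) = (hard_poly d :: 'a::comm_ring_1 mpoly)"
proof -
  have yz: "env (yvar d j t) = mvar (yvar d j t)" "env (zvar d j t) = mvar (zvar d j t)"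
    if "j < nfactors d" "t < nterms d" for j t
    using env yvar_lt_extra_var[OF that] zvar_lt_extra_var[OF that] by (auto simp: num_vars_def)
  have e: "env (extra_var d) = mvar (extra_var d)"
    using env by (simp add: num_vars_def)
  define X :: "'a mpoly" where "X = (if odd d then mvar (extra_var d) else 1)"
  have "expr_poly env (hard_expr d)
          = (\<Prod>j<nfactors d. \<Sum>t<nterms d. mvar (yvar d j t) * mvar (zvar d j t)) * X"
    unfolding hard_expr_def expr_poly_prod_expr map_append prod_list.append map_map o_def
      expr_poly_sum_expr expr_poly.simps X_def
    using yz e
    by (simp add: interv_sum_list_conv_sum_set_nat flip: prod.distinct_set_conv_list atLeast0LessThan)
  also have "\<dots> = (\<Sum>\<sigma>\<in>choices d. \<Prod>j<nfactors d. mvar (yvar d j (\<sigma> j)) * mvar (zvar d j (\<sigma> j))) * X"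
    by (simp add: choices_def prod_sum_PiE)
  also have "\<dots> = hard_poly d"
    unfolding hard_poly_def sum_distrib_right X_def
    by (rule sum.cong) (simp_all add: mvar_mult_mvar prod_single_one mult_single choice_mon_def mvar_def)
  finally show ?thesis .
qed

lemma meval_hard_poly:
  "meval (hard_poly d) x =
     (\<Prod>j<nfactors d. \<Sum>t<nterms d. x (yvar d j t) * x (zvar d j t)) * (if odd d then x (extra_var d) else 1)"
proof -
  have "meval (hard_poly d) x = (\<Sum>\<sigma>\<in>choices d. mon_eval (choice_mon d \<sigma>) x)"
    by (simp add: hard_poly_def meval_sum[OF finite_choices] meval_single)
  also have "\<dots> = (\<Sum>\<sigma>\<in>choices d. (\<Prod>j<nfactors d. x (yvar d j (\<sigma> j)) * x (zvar d j (\<sigma> j)))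
                                   * (if odd d then x (extra_var d) else 1))"
    by (rule sum.cong) (simp_all add: choice_mon_def mon_eval_add mon_eval_sum)
  also have "\<dots> = (\<Prod>j<nfactors d. \<Sum>t<nterms d. x (yvar d j t) * x (zvar d j t))
                  * (if odd d then x (extra_var d) else 1)"
    by (simp add: choices_def prod_sum_PiE sum_distrib_right)
  finally show ?thesis .
qed

lemma keys_hard_poly: "Poly_Mapping.keys (hard_poly d :: 'a::comm_ring_1 mpoly) \<subseteq> choice_mon d ` choices d"
  unfolding hard_poly_def using keys_sum by fastforce

lemma mon_degree_choice_mon: "mon_degree (choice_mon d \<sigma>) = d"
proof -
  have "mon_degree (choice_mon d \<sigma>) = 2 * nfactors d + (if odd d then 1 else 0)"
    by (simp add: choice_mon_def mon_degree_add mon_degree_sum)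
  then show ?thesis
    by (simp add: nfactors_def)
qed

lemma keys_choice_mon:
  assumes "\<sigma> \<in> choices d"
  shows "Poly_Mapping.keys (choice_mon d \<sigma>) \<subseteq> {..<num_vars d}"
proof -
  have "Poly_Mapping.keys (choice_mon d \<sigma>) \<subseteq>
          (\<Union>j<nfactors d. {yvar d j (\<sigma> j), zvar d j (\<sigma> j)}) \<union> {extra_var d}"
  proof -
    have pair: "Poly_Mapping.keys (Poly_Mapping.single a (1::nat) + Poly_Mapping.single b 1) \<subseteq> {a, b}"
      for a b
      using keys_add[of "Poly_Mapping.single a (1::nat)" "Poly_Mapping.single b 1"]
      by (simp add: insert_commute)
    have "Poly_Mapping.keys (\<Sum>j<nfactors d. Poly_Mapping.single (yvar d j (\<sigma> j)) (1::nat)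
                                             + Poly_Mapping.single (zvar d j (\<sigma> j)) 1)
            \<subseteq> (\<Union>j<nfactors d. {yvar d j (\<sigma> j), zvar d j (\<sigma> j)})"
      by (rule order_trans[OF keys_sum]) (intro UN_mono order_refl pair)
    then show ?thesis
      unfolding choice_mon_def using keys_add by (fastforce split: if_splits)
  qed
  moreover have "yvar d j (\<sigma> j) < num_vars d" "zvar d j (\<sigma> j) < num_vars d" if "j < nfactors d" for j
    using yvar_lt_extra_var[OF that choices_lt[OF assms that]]
      zvar_lt_extra_var[OF that choices_lt[OF assms that]]
    by (simp_all add: num_vars_def)
  ultimately show ?thesis
    by (auto simp: num_vars_def)
qed

lemma mvars_hard_poly: "mvars (hard_poly d :: 'a::comm_ring_1 mpoly) \<subseteq> {..<num_vars d}"
  unfolding mvars_def using keys_hard_poly keys_choice_mon by blast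

lemma num_vars_le: "num_vars d \<le> (d + 1) ^ 2"
proof -
  have "2 * nfactors d * nterms d \<le> d * (d + 1)"
    unfolding nfactors_def nterms_def by (intro mult_le_mono1) simp
  then show ?thesis
    by (simp add: num_vars_def extra_var_def power2_eq_square algebra_simps)
qed

lemma le_num_vars: "d \<le> num_vars d"
  by (cases "d \<le> 1") (auto simp: num_vars_def extra_var_def nfactors_def nterms_def)

lemma expr_size_hard_expr: "expr_size (hard_expr d :: 'a::comm_ring_1 expr) \<le> (d + 1) ^ 3"
proof -
  have size: "expr_size (hard_expr d :: 'a expr) =
                1 + nfactors d * (4 * nterms d + 2) + (if odd d then 2 else 0)"
    by (simp add: hard_expr_def expr_size_prod_expr expr_size_sum_expr o_def sum_list_triv)
  consider h where "d = 2 * h" | h where "d = 2 * h + 1"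
    by (metis oddE evenE)
  then show ?thesis
    unfolding size by cases (simp_all add: nfactors_def nterms_def power3_eq_cube algebra_simps)
qed

definition splice :: "nat set \<Rightarrow> (nat \<Rightarrow> 'a) \<Rightarrow> (nat \<Rightarrow> 'a) \<Rightarrow> nat \<Rightarrow> 'a" where
  "splice Y \<alpha> \<beta> i = (if i \<in> Y then \<alpha> i else \<beta> i)"

definition y_vars :: "nat \<Rightarrow> nat set" where
  "y_vars d = {i. even i \<and> i < extra_var d}"

definition y_point :: "nat \<Rightarrow> (nat \<Rightarrow> nat) \<Rightarrow> nat \<Rightarrow> 'a::comm_ring_1" where
  "y_point d \<sigma> i = (if \<exists>j<nfactors d. i = yvar d j (\<sigma> j) then 1 else 0)"

definition z_point :: "nat \<Rightarrow> (nat \<Rightarrow> nat) \<Rightarrow> nat \<Rightarrow> 'a::comm_ring_1" where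
  "z_point d \<tau> i = (if i = extra_var d \<or> (\<exists>j<nfactors d. i = zvar d j (\<tau> j)) then 1 else 0)"

lemma splice_points_boolean: "splice Y (y_point d \<sigma>) (z_point d \<tau>) i \<in> {0, 1::'a::comm_ring_1}"
  by (simp add: splice_def y_point_def z_point_def)

lemma splice_points_yvar:
  assumes "\<sigma> \<in> choices d" "j < nfactors d" "u < nterms d"
  shows "splice (y_vars d) (y_point d \<sigma>) (z_point d \<tau>) (yvar d j u) = (if u = \<sigma> j then 1 else (0::'a::comm_ring_1))"
proof -
  have "yvar d j u \<in> y_vars d"
    using yvar_lt_extra_var[OF assms(2,3)] by (simp add: y_vars_def yvar_def)
  moreover have "(\<exists>j'<nfactors d. yvar d j u = yvar d j' (\<sigma> j')) \<longleftrightarrow> u = \<sigma> j"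
  proof
    assume "\<exists>j'<nfactors d. yvar d j u = yvar d j' (\<sigma> j')"
    then obtain j' where "j' < nfactors d" "yvar d j u = yvar d j' (\<sigma> j')"
      by blast
    then show "u = \<sigma> j"
      using yvar_eq_iff[OF assms(3) choices_lt[OF assms(1)]] by auto
  qed (use assms(2) in blast)
  ultimately show ?thesis
    by (simp add: splice_def y_point_def)
qed

lemma splice_points_zvar:
  assumes "\<tau> \<in> choices d" "j < nfactors d" "u < nterms d"
  shows "splice (y_vars d) (y_point d \<sigma>) (z_point d \<tau>) (zvar d j u) = (if u = \<tau> j then 1 else (0::'a::comm_ring_1))"
proof -
  have "zvar d j u \<notin> y_vars d" "zvar d j u \<noteq> extra_var d"
    using zvar_lt_extra_var[OF assms(2,3)] by (simp_all add: y_vars_def zvar_def)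
  moreover have "(\<exists>j'<nfactors d. zvar d j u = zvar d j' (\<tau> j')) \<longleftrightarrow> u = \<tau> j"
  proof
    assume "\<exists>j'<nfactors d. zvar d j u = zvar d j' (\<tau> j')"
    then obtain j' where "j' < nfactors d" "zvar d j u = zvar d j' (\<tau> j')"
      by blast
    then show "u = \<tau> j"
      using zvar_eq_iff[OF assms(3) choices_lt[OF assms(1)]] by auto
  qed (use assms(2) in blast)
  ultimately show ?thesis
    by (simp add: splice_def z_point_def)
qed

lemma splice_points_extra_var: "splice (y_vars d) (y_point d \<sigma>) (z_point d \<tau>) (extra_var d) = 1"
  by (simp add: splice_def z_point_def y_vars_def)

lemma prod_indicator_choices:
  assumes "\<sigma> \<in> choices d" "\<tau> \<in> choices d"
  shows "(\<Prod>j<nfactors d. if \<sigma> j = \<tau> j then 1 else 0) = (if \<sigma> = \<tau> then 1 else (0::'a::comm_ring_1))"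
proof (cases "\<sigma> = \<tau>")
  case False
  then obtain j where j: "\<sigma> j \<noteq> \<tau> j" by auto
  then have "j < nfactors d"
    using assms unfolding choices_def by (metis PiE_arb lessThan_iff)
  then have "(\<Prod>j<nfactors d. if \<sigma> j = \<tau> j then 1 else 0) = (0::'a)"
    using j by (intro prod_zero) auto
  then show ?thesis
    using False by simp
qed simp

lemma meval_hard_poly_splice_points:
  assumes \<sigma>: "\<sigma> \<in> choices d" and \<tau>: "\<tau> \<in> choices d"
  shows "meval (hard_poly d) (splice (y_vars d) (y_point d \<sigma>) (z_point d \<tau>)) = (if \<sigma> = \<tau> then 1 else (0::'a::comm_ring_1))"
proof -
  let ?x = "splice (y_vars d) (y_point d \<sigma>) (z_point d \<tau>) :: nat \<Rightarrow> 'a"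
  have inner: "(\<Sum>u<nterms d. ?x (yvar d j u) * ?x (zvar d j u)) = (if \<sigma> j = \<tau> j then 1 else 0)"
    if j: "j < nfactors d" for j
  proof -
    have "(\<Sum>u<nterms d. ?x (yvar d j u) * ?x (zvar d j u))
            = (\<Sum>u<nterms d. if u = \<sigma> j then (if \<sigma> j = \<tau> j then 1 else 0) else 0)"
      by (rule sum.cong) (simp_all add: splice_points_yvar[OF \<sigma> j] splice_points_zvar[OF \<tau> j])
    then show ?thesis
      using choices_lt[OF \<sigma> j] by simp
  qed
  show ?thesis
    by (simp add: meval_hard_poly inner splice_points_extra_var prod_indicator_choices[OF \<sigma> \<tau>])
qed

lemma total_degree_hard_poly: "total_degree (hard_poly d :: 'a::field mpoly) = d"
proof -
  obtain \<sigma> where \<sigma>: "\<sigma> \<in> choices d"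
    using choices_nonempty by blast
  have "Poly_Mapping.keys (hard_poly d :: 'a mpoly) \<noteq> {}"
    using meval_hard_poly_splice_points[OF \<sigma> \<sigma>, where 'a='a] by (auto simp: meval_def)
  moreover have "mon_degree m = d" if "m \<in> Poly_Mapping.keys (hard_poly d :: 'a mpoly)" for m
    using keys_hard_poly[where 'a='a, of d] that mon_degree_choice_mon by blast
  ultimately have "mon_degree ` Poly_Mapping.keys (hard_poly d :: 'a mpoly) = {d}"
    by blast
  then show ?thesis
    by (simp add: total_degree_def)
qed

lemma in_VNP_hard_poly: "in_VNP num_vars (hard_poly :: nat \<Rightarrow> 'a::field mpoly)"
  unfolding in_VNP_def
proof (intro exI[of _ "3::nat"] exI[of _ "\<lambda>_. 0"] exI[of _ "\<lambda>d. compile 0 (hard_expr d :: 'a expr)"] allI conjI)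
  fix d :: nat
  have "(d + 1) ^ 2 \<le> (d + 1) ^ 3"
    by (rule power_increasing) auto
  then show "num_vars d \<le> (d + 1) ^ 3"
    using num_vars_le[of d] by linarith
  show "circuit_size (compile 0 (hard_expr d :: 'a expr)) \<le> (d + 1) ^ 3"
    using expr_size_hard_expr by (simp add: circuit_size_def)
  have "d \<le> (d + 1) ^ 3"
    using self_le_power[of "d + 1" 3] by simp
  then show "total_degree (circuit_poly mvar (compile 0 (hard_expr d :: 'a expr))) \<le> (d + 1) ^ 3"
    by (simp add: circuit_poly_compile expr_poly_hard_expr total_degree_hard_poly)
  \<comment> \<open>No auxiliary Boolean variables are needed: the sum over {0,1}^0 has one term.\<close>
  have "bool_vecs 0 = {\<lambda>_. False}"
    by (auto simp: bool_vecs_def)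
  then show "hard_poly d = (\<Sum>b\<in>bool_vecs ((\<lambda>_. 0) d).
               circuit_poly (\<lambda>i. if i < num_vars d then mvar i else if b (i - num_vars d) then 1 else 0)
                 (compile 0 (hard_expr d)))"
    by (simp add: circuit_poly_compile expr_poly_hard_expr)
qed simp

section \<open>Spans of functions into a field\<close>

definition scale_fun :: "'a::field \<Rightarrow> ('b \<Rightarrow> 'a) \<Rightarrow> 'b \<Rightarrow> 'a" where
  "scale_fun c f = (\<lambda>x. c * f x)"

lemma vector_space_scale_fun: "vector_space (scale_fun :: 'a::field \<Rightarrow> ('b \<Rightarrow> 'a) \<Rightarrow> 'b \<Rightarrow> 'a)"
  by unfold_locales (auto simp: scale_fun_def fun_eq_iff algebra_simps)

lemma module_scale_fun: "module (scale_fun :: 'a::field \<Rightarrow> ('b \<Rightarrow> 'a) \<Rightarrow> 'b \<Rightarrow> 'a)"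
  using vector_space_scale_fun by (simp add: module_iff_vector_space)

lemma sum_fun_apply: "(\<Sum>i\<in>A. f i) x = (\<Sum>i\<in>A. f i x)"
  by (induction A rule: infinite_finite_induct) auto

lemma card_le_card_span_of_dual_points:
  fixes R :: "'i \<Rightarrow> 'b \<Rightarrow> 'a::field" and G :: "('b \<Rightarrow> 'a) set"
  assumes "finite I" "finite G"
    and span: "\<And>i. i \<in> I \<Longrightarrow> R i \<in> module.span scale_fun G"
    and dual: "\<And>i j. i \<in> I \<Longrightarrow> j \<in> I \<Longrightarrow> R i (p j) = (if i = j then 1 else 0)"
  shows "card I \<le> card G"
proof -
  have inj: "inj_on R I"
  proof
    fix i j
    assume "i \<in> I" "j \<in> I" "R i = R j"
    then show "i = j"
      using dual[of i i] dual[of j i] by (metis one_neq_zero)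
  qed
  have "\<not> module.dependent scale_fun (R ` I)"
  proof
    assume "module.dependent scale_fun (R ` I)"
    then obtain u where u: "\<exists>v\<in>R ` I. u v \<noteq> 0" "(\<Sum>v\<in>R ` I. scale_fun (u v) v) = 0"
      using module.dependent_finite[OF module_scale_fun] \<open>finite I\<close> by blast
    have "u (R j) = 0" if j: "j \<in> I" for j
    proof -
      have "0 = (\<Sum>v\<in>R ` I. scale_fun (u v) v) (p j)"
        using u(2) by simp
      also have "\<dots> = (\<Sum>i\<in>I. u (R i) * R i (p j))"
        by (simp add: sum_fun_apply sum.reindex[OF inj] scale_fun_def)
      also have "\<dots> = (\<Sum>i\<in>I. if i = j then u (R j) else 0)"
        by (rule sum.cong) (use dual j in auto)
      also have "\<dots> = u (R j)"
        using j \<open>finite I\<close> by simp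
      finally show ?thesis by simp
    qed
    then show False
      using u(1) by auto
  qed
  then have "card (R ` I) \<le> card G"
    using vector_space.independent_span_bound[OF vector_space_scale_fun \<open>finite G\<close>] span
    by (auto simp: module_iff_vector_space)
  then show ?thesis
    using card_image[OF inj] by simp
qed

section \<open>\<Sigma>\<Pi>\<Sigma> circuits under a split of the variables\<close>

definition affine_inside :: "nat \<Rightarrow> nat set \<Rightarrow> 'a::comm_ring_1 affine \<Rightarrow> (nat \<Rightarrow> 'a) \<Rightarrow> 'a" where
  "affine_inside n Y L \<alpha> = (\<Sum>i<n. if i \<in> Y then snd L i * \<alpha> i else 0)"

definition affine_outside :: "nat \<Rightarrow> nat set \<Rightarrow> 'a::comm_ring_1 affine \<Rightarrow> (nat \<Rightarrow> 'a) \<Rightarrow> 'a" where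
  "affine_outside n Y L \<beta> = fst L + (\<Sum>i<n. if i \<in> Y then 0 else snd L i * \<beta> i)"

lemma affine_eval_splice:
  "affine_eval n L (splice Y \<alpha> \<beta>) = affine_inside n Y L \<alpha> + affine_outside n Y L \<beta>"
proof -
  have "(\<Sum>i<n. snd L i * splice Y \<alpha> \<beta> i) =
          (\<Sum>i<n. (if i \<in> Y then snd L i * \<alpha> i else 0) + (if i \<in> Y then 0 else snd L i * \<beta> i))"
    by (rule sum.cong) (auto simp: splice_def)
  then show ?thesis
    by (simp add: affine_eval_def affine_inside_def affine_outside_def sum.distrib algebra_simps)
qed

text \<open>Expanding product gate k as a sum over sets T of factors contributes the cofactor
  indexed by (k, T), scaled by a coefficient depending only on the inside assignment.\<close>
definition sps_cofactors :: "nat \<Rightarrow> nat set \<Rightarrow> 'a::comm_ring_1 sps \<Rightarrow> ((nat \<Rightarrow> 'a) \<Rightarrow> 'a) set" where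
  "sps_cofactors n Y C =
     (\<lambda>(k, T) \<beta>. \<Prod>i\<in>{..<length (C ! k)} - T. affine_outside n Y (C ! k ! i) \<beta>)
       ` (SIGMA k:{..<length C}. Pow {..<length (C ! k)})"

lemma prod_list_map_conv_prod_nth:
  "prod_list (map f xs) = (\<Prod>i<length xs. f (xs ! i))"
  by (induction xs) (simp_all del: prod.lessThan_Suc add: prod.lessThan_Suc_shift)

lemma sps_eval_splice_in_span:
  fixes C :: "'a::field sps"
  shows "(\<lambda>\<beta>. sps_eval n C (splice Y \<alpha> \<beta>)) \<in> module.span scale_fun (sps_cofactors n Y C)"
proof -
  let ?A = "SIGMA k:{..<length C}. Pow {..<length (C ! k)}"
  let ?g = "\<lambda>(k, T) \<beta>. \<Prod>i\<in>{..<length (C ! k)} - T. affine_outside n Y (C ! k ! i) \<beta>"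
  let ?c = "\<lambda>(k, T). \<Prod>i\<in>T. affine_inside n Y (C ! k ! i) \<alpha>"
  have "sps_eval n C (splice Y \<alpha> \<beta>) = (\<Sum>kT\<in>?A. scale_fun (?c kT) (?g kT)) \<beta>" for \<beta>
  proof -
    have "sps_eval n C (splice Y \<alpha> \<beta>) =
            (\<Sum>k<length C. \<Prod>i<length (C ! k).
               affine_inside n Y (C ! k ! i) \<alpha> + affine_outside n Y (C ! k ! i) \<beta>)"
      by (simp add: sps_eval_def sum_list_sum_nth atLeast0LessThan prod_list_map_conv_prod_nth
          affine_eval_splice)
    also have "\<dots> = (\<Sum>k<length C. \<Sum>T\<in>Pow {..<length (C ! k)}.
                      (\<Prod>i\<in>T. affine_inside n Y (C ! k ! i) \<alpha>) *
                      (\<Prod>i\<in>{..<length (C ! k)} - T. affine_outside n Y (C ! k ! i) \<beta>))"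
      by (simp add: prod_add)
    also have "\<dots> = (\<Sum>kT\<in>?A. scale_fun (?c kT) (?g kT)) \<beta>"
      by (subst sum.Sigma) (auto simp: case_prod_beta sum_fun_apply scale_fun_def)
    finally show ?thesis .
  qed
  then have "(\<lambda>\<beta>. sps_eval n C (splice Y \<alpha> \<beta>)) = (\<Sum>kT\<in>?A. scale_fun (?c kT) (?g kT))"
    by blast
  then show ?thesis
    by (simp only:)
       (intro module.span_sum[OF module_scale_fun] module.span_scale[OF module_scale_fun]
          module.span_base[OF module_scale_fun], auto simp: sps_cofactors_def)
qed

lemma finite_sps_cofactors: "finite (sps_cofactors n Y C)"
  by (simp add: sps_cofactors_def)

lemma card_sps_cofactors_le:
  assumes "sps_formal_degree C \<le> D"
  shows "card (sps_cofactors n Y C) \<le> length C * 2 ^ D"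
proof -
  have fanin: "length (C ! k) \<le> D" if "k < length C" for k
    using assms that Max_ge[of "insert 0 (length ` set C)" "length (C ! k)"]
    by (simp add: sps_formal_degree_def)
  have "card (sps_cofactors n Y C) \<le> card (SIGMA k:{..<length C}. Pow {..<length (C ! k)})"
    unfolding sps_cofactors_def by (rule card_image_le) simp
  also have "\<dots> = (\<Sum>k<length C. 2 ^ length (C ! k))"
    by (simp add: card_SigmaI card_Pow)
  also have "\<dots> \<le> (\<Sum>k<length C. (2::nat) ^ D)"
    by (rule sum_mono) (use fanin in \<open>auto intro: power_increasing\<close>)
  finally show ?thesis
    by simp
qed

section \<open>The lower bound\<close>

lemma top_fanin_lower_bound:
  fixes C :: "'a::field sps"
  assumes equiv: "functionally_equiv (num_vars d) C (hard_poly d)" and "sps_formal_degree C \<le> d"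
  shows "nterms d ^ nfactors d \<le> length C * 2 ^ d"
proof -
  let ?R = "\<lambda>\<sigma> \<beta>. sps_eval (num_vars d) C (splice (y_vars d) (y_point d \<sigma>) \<beta>)"
  have "card (choices d) \<le> card (sps_cofactors (num_vars d) (y_vars d) C)"
  proof (rule card_le_card_span_of_dual_points[where R = ?R and p = "z_point d"])
    show "?R \<sigma> (z_point d \<tau>) = (if \<sigma> = \<tau> then 1 else 0)"
      if "\<sigma> \<in> choices d" "\<tau> \<in> choices d" for \<sigma> \<tau>
      using equiv splice_points_boolean meval_hard_poly_splice_points[OF that]
      unfolding functionally_equiv_def by metis
  qed (simp_all add: finite_choices finite_sps_cofactors sps_eval_splice_in_span)
  also have "\<dots> \<le> length C * 2 ^ d"
    using assms(2) by (rule card_sps_cofactors_le)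
  finally show ?thesis
    by (simp add: card_choices)
qed

text \<open>The threshold 255 is where ln (d + 1) \<ge> 8 ln 2, which lets (d + 1)^h / 2^d,
  with h \<ge> (d - 1)/2, dominate n^(d/8) \<le> (d + 1)^(d/4).\<close>
lemma exp_le_of_power_le:
  fixes d h n L :: nat
  assumes d: "255 \<le> d" and h: "d \<le> 2 * h + 1"
    and L: "(d + 1) ^ h \<le> L * 2 ^ d" and n: "1 \<le> n" "n \<le> (d + 1) ^ 2"
  shows "exp (1/8 * real d * ln (real n)) \<le> real L"
proof -
  define l where "l = ln (real d + 1)"
  have l0: "0 \<le> l"
    by (simp add: l_def)
  have "ln ((2::real) ^ 8) \<le> l"
    unfolding l_def using d by (subst ln_le_cancel_iff) auto
  moreover have "ln ((2::real) ^ 8) = 8 * ln 2"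
    by (simp only: ln_realpow)
  ultimately have l2: "8 * ln 2 \<le> l"
    by simp
  have "real n \<le> (real d + 1) ^ 2"
    using n(2) by (metis of_nat_1 of_nat_add of_nat_le_iff of_nat_power)
  then have "ln (real n) \<le> 2 * l"
    using n(1) by (simp add: l_def ln_realpow flip: ln_le_cancel_iff)
  then have "1/8 * real d * ln (real n) \<le> 1/8 * real d * (2 * l)"
    by (intro mult_left_mono) auto
  also have "\<dots> \<le> real h * l - real d * ln 2"
  proof -
    have "real d * l \<le> (2 * real h + 1) * l"
      using h l0 by (intro mult_right_mono) auto
    moreover have "real d * (8 * ln 2) \<le> real d * l"
      using l2 by (intro mult_left_mono) auto
    moreover have "4 * l \<le> real d * l"
      using d l0 by (intro mult_right_mono) auto
    ultimately show ?thesis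
      by (simp add: algebra_simps)
  qed
  finally have "exp (1/8 * real d * ln (real n)) \<le> exp (real h * l - real d * ln 2)"
    by simp
  also have "\<dots> = (real d + 1) ^ h / 2 ^ d"
    using d by (simp add: l_def exp_diff exp_of_nat_mult)
  also have "\<dots> \<le> real L"
  proof -
    have "real ((d + 1) ^ h) \<le> real (L * 2 ^ d)"
      using L by (simp only: of_nat_le_iff)
    then show ?thesis
      by (simp add: divide_le_eq add.commute)
  qed
  finally show ?thesis .
qed

lemma sps_size_lower_bound:
  fixes C :: "'a::field sps"
  assumes "255 \<le> d" "sps_formal_degree C = d" "functionally_equiv (num_vars d) C (hard_poly d)"
  shows "exp (1/8 * real d * ln (real (num_vars d))) \<le> real (sps_size C)"
proof -
  have "exp (1/8 * real d * ln (real (num_vars d))) \<le> real (length C)"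
  proof (rule exp_le_of_power_le[OF assms(1)])
    show "(d + 1) ^ nfactors d \<le> length C * 2 ^ d"
      using top_fanin_lower_bound assms(2,3) by (fastforce simp: nterms_def)
  qed (use num_vars_le[of d] in \<open>simp_all add: nfactors_def num_vars_def\<close>)
  then show ?thesis
    by (simp add: sps_size_def)
qed

lemma num_vars_polynomial: "d \<le> num_vars d ^ 2 \<and> num_vars d \<le> (d + 1) ^ 2"
  using le_num_vars[of d] self_le_power[of "num_vars d" 2] num_vars_le[of d]
  by (simp add: num_vars_def)

theorem theorem1p6:
  shows "\<exists>(P :: nat \<Rightarrow> 'a::field mpoly) (nv :: nat \<Rightarrow> nat).
     in_VNP nv P \<and>
     (\<exists>k::nat. \<forall>d. d \<le> (nv d) ^ k \<and> nv d \<le> (d + 1) ^ k) \<and>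
     (\<forall>d. total_degree (P d) = d \<and> mvars (P d) \<subseteq> {..<nv d}) \<and>
     (\<exists>c::real. c > 0 \<and> (\<exists>d0. \<forall>d\<ge>d0. \<forall>C :: 'a sps.
        sps_formal_degree C = d \<and> functionally_equiv (nv d) C (P d) \<longrightarrow>
        real (sps_size C) \<ge> exp (c * real d * ln (real (nv d)))))"
proof (intro exI[of _ hard_poly] exI[of _ num_vars] conjI)
  show "in_VNP num_vars (hard_poly :: nat \<Rightarrow> 'a mpoly)"
    by (rule in_VNP_hard_poly)
  show "\<exists>k. \<forall>d. d \<le> num_vars d ^ k \<and> num_vars d \<le> (d + 1) ^ k"
    using num_vars_polynomial by blast
  show "\<forall>d. total_degree (hard_poly d :: 'a mpoly) = d \<and> mvars (hard_poly d :: 'a mpoly) \<subseteq> {..<num_vars d}"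
    using total_degree_hard_poly mvars_hard_poly by blast
  show "\<exists>c::real. c > 0 \<and> (\<exists>d0. \<forall>d\<ge>d0. \<forall>C :: 'a sps.
          sps_formal_degree C = d \<and> functionally_equiv (num_vars d) C (hard_poly d) \<longrightarrow>
          real (sps_size C) \<ge> exp (c * real d * ln (real (num_vars d))))"
    using sps_size_lower_bound by (intro exI[of _ "1/8"] conjI exI[of _ 255]) auto
qed

end
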